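(* Let $C$ be a small category and let $\xi_*:X\to Y$ be a morphism of $\Delta/C$ such that $\xi:[q_X]\to[q_Y]$ is surjective. Then its class $[\xi_*]:X\to Y$ is an isomorphism in $[\Delta/C]$.
   Context: For $q\ge0$, $[q]=\{0<\dots<q\}$ viewed as a category. A $q$-simplex of the nerve $NC$ is a functor $X:[q]\to C$; write $q_X=q$. The category $\Delta/C$ has as objects all simplices of $NC$ (all dimensions) and as morphisms $X\to Y$ the order-preserving maps $\xi:[q_X]\to[q_Y]$ with $Y\circ\xi=X$, written $\xi_*$. Given a $q$-simplex $X$ and a surjective order-preserving $s:[q+1]\to[q]$, let $d,d':[q]\to[q+1]$ be the two order-preserving right inverses of $s$; the morphisms $d_*,d'_*:X\to X\circ s$ are called elementary equivalent. $\sim$ is the smallest equivalence relation on morphisms of $\Delta/C$ (between the same source and target) that is compatible with composition and contains all elementary equivalent pairs; $[\Delta/C]$ is the quotient category with the same objects and morphisms the $\sim$-classes $[\xi_*]$. *)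

theory Defs
  imports Main
begin

record ('o, 'm) cat =
  Ob   :: "'o set"
  Ar   :: "'m set"
  Dom  :: "'m \<Rightarrow> 'o"
  Cod  :: "'m \<Rightarrow> 'o"
  Idm  :: "'o \<Rightarrow> 'm"
  Comp :: "'m \<Rightarrow> 'm \<Rightarrow> 'm"   (* Comp g f = g o f *)

definition category :: "('o, 'm) cat \<Rightarrow> bool" where
  "category C \<longleftrightarrow>
     (\<forall>f\<in>Ar C. Dom C f \<in> Ob C \<and> Cod C f \<in> Ob C) \<and>
     (\<forall>a\<in>Ob C. Idm C a \<in> Ar C \<and> Dom C (Idm C a) = a \<and> Cod C (Idm C a) = a) \<and>
     (\<forall>f\<in>Ar C. \<forall>g\<in>Ar C. Cod C f = Dom C g \<longrightarrow>
        Comp C g f \<in> Ar C \<and> Dom C (Comp C g f) = Dom C f \<and> Cod C (Comp C g f) = Cod C g) \<and>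
     (\<forall>f\<in>Ar C. Comp C f (Idm C (Dom C f)) = f \<and> Comp C (Idm C (Cod C f)) f = f) \<and>
     (\<forall>f\<in>Ar C. \<forall>g\<in>Ar C. \<forall>h\<in>Ar C. Cod C f = Dom C g \<longrightarrow> Cod C g = Dom C h \<longrightarrow>
        Comp C h (Comp C g f) = Comp C (Comp C h g) f)"

text \<open>A q-simplex is stored as its dimension, its object map on {0..q} and its
  morphism map on pairs i \<le> j \<le> q (the image of i \<le> j), extended by undefined elsewhere
  so that HOL equality is equality of functors.\<close>

record ('o, 'm) simplex =
  dim :: nat
  sob :: "nat \<Rightarrow> 'o"
  sar :: "nat \<Rightarrow> nat \<Rightarrow> 'm"

definition is_simplex :: "('o, 'm) cat \<Rightarrow> ('o, 'm) simplex \<Rightarrow> bool" where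
  "is_simplex C X \<longleftrightarrow>
     (\<forall>i\<le>dim X. sob X i \<in> Ob C) \<and>
     (\<forall>i j. i \<le> j \<and> j \<le> dim X \<longrightarrow>
        sar X i j \<in> Ar C \<and> Dom C (sar X i j) = sob X i \<and> Cod C (sar X i j) = sob X j) \<and>
     (\<forall>i\<le>dim X. sar X i i = Idm C (sob X i)) \<and>
     (\<forall>i j k. i \<le> j \<and> j \<le> k \<and> k \<le> dim X \<longrightarrow> sar X i k = Comp C (sar X j k) (sar X i j)) \<and>
     (\<forall>i. dim X < i \<longrightarrow> sob X i = undefined) \<and>
     (\<forall>i j. \<not> (i \<le> j \<and> j \<le> dim X) \<longrightarrow> sar X i j = undefined)"

definition opmap :: "(nat \<Rightarrow> nat) \<Rightarrow> nat \<Rightarrow> nat \<Rightarrow> bool" where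
  "opmap \<xi> p q \<longleftrightarrow>
     (\<forall>i\<le>p. \<xi> i \<le> q) \<and> (\<forall>i j. i \<le> j \<and> j \<le> p \<longrightarrow> \<xi> i \<le> \<xi> j) \<and>
     (\<forall>i. p < i \<longrightarrow> \<xi> i = undefined)"

definition precomp :: "('o, 'm) simplex \<Rightarrow> (nat \<Rightarrow> nat) \<Rightarrow> nat \<Rightarrow> ('o, 'm) simplex" where
  "precomp Y \<xi> p =
     \<lparr> dim = p,
       sob = (\<lambda>i. if i \<le> p then sob Y (\<xi> i) else undefined),
       sar = (\<lambda>i j. if i \<le> j \<and> j \<le> p then sar Y (\<xi> i) (\<xi> j) else undefined) \<rparr>"

type_synonym ('o, 'm) dmor = "('o, 'm) simplex \<times> (nat \<Rightarrow> nat) \<times> ('o, 'm) simplex"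

definition src :: "('o, 'm) dmor \<Rightarrow> ('o, 'm) simplex" where "src f = fst f"
definition tgt :: "('o, 'm) dmor \<Rightarrow> ('o, 'm) simplex" where "tgt f = snd (snd f)"
definition mapof :: "('o, 'm) dmor \<Rightarrow> nat \<Rightarrow> nat" where "mapof f = fst (snd f)"

definition is_dmor :: "('o, 'm) cat \<Rightarrow> ('o, 'm) dmor \<Rightarrow> bool" where
  "is_dmor C f \<longleftrightarrow>
     is_simplex C (src f) \<and> is_simplex C (tgt f) \<and>
     opmap (mapof f) (dim (src f)) (dim (tgt f)) \<and>
     precomp (tgt f) (mapof f) (dim (src f)) = src f"

definition dcomp :: "('o, 'm) dmor \<Rightarrow> ('o, 'm) dmor \<Rightarrow> ('o, 'm) dmor" where
  "dcomp g f = (src f, (\<lambda>i. if i \<le> dim (src f) then mapof g (mapof f i) else undefined), tgt g)"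

definition did :: "('o, 'm) simplex \<Rightarrow> ('o, 'm) dmor" where
  "did X = (X, (\<lambda>i. if i \<le> dim X then i else undefined), X)"

inductive dsim :: "('o, 'm) cat \<Rightarrow> ('o, 'm) dmor \<Rightarrow> ('o, 'm) dmor \<Rightarrow> bool"
  for C :: "('o, 'm) cat" where
  elem: "\<lbrakk> is_simplex C X; dim X = q;
           opmap s (Suc q) q; s ` {0..Suc q} = {0..q};
           opmap d q (Suc q); opmap d' q (Suc q);
           \<forall>i\<le>q. s (d i) = i; \<forall>i\<le>q. s (d' i) = i \<rbrakk>
         \<Longrightarrow> dsim C (X, d, precomp X s (Suc q)) (X, d', precomp X s (Suc q))"
| refl: "is_dmor C f \<Longrightarrow> dsim C f f"
| sym: "dsim C f g \<Longrightarrow> dsim C g f"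
| trans: "dsim C f g \<Longrightarrow> dsim C g h \<Longrightarrow> dsim C f h"
| comp_left: "dsim C f g \<Longrightarrow> is_dmor C h \<Longrightarrow> src h = tgt f \<Longrightarrow> dsim C (dcomp h f) (dcomp h g)"
| comp_right: "dsim C f g \<Longrightarrow> is_dmor C h \<Longrightarrow> tgt h = src f \<Longrightarrow> dsim C (dcomp f h) (dcomp g h)"

definition quot_iso :: "('o, 'm) cat \<Rightarrow> ('o, 'm) dmor \<Rightarrow> bool" where
  "quot_iso C f \<longleftrightarrow>
     (\<exists>g. is_dmor C g \<and> src g = tgt f \<and> tgt g = src f \<and>
          dsim C (dcomp g f) (did (src f)) \<and> dsim C (dcomp f g) (did (tgt f)))"

end

theory Submission
  imports Defs
begin

text \<open>Choose the least section g of \<xi>.  Then \<xi> \<circ> g is the identity, and \<phi> = g \<circ> \<xi> satisfies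
  \<phi> i \<le> i with \<xi> \<circ> \<phi> = \<xi>.  Whenever \<xi> a = \<xi> (a+1), the edge a \<rightarrow> a+1 of X = Y \<circ> \<xi> is an
  identity, and an elementary equivalence through the degeneracy at that edge lets one
  raise a value of \<phi> by one.  Raising the largest point that \<phi> moves, repeatedly, turns
  \<phi>_* into the identity of X, so g_* is inverse to \<xi>_* in [\<Delta>/C].\<close>

lemma precomp_sel [simp]:
  "dim (precomp X b n) = n"
  "sob (precomp X b n) i = (if i \<le> n then sob X (b i) else undefined)"
  "sar (precomp X b n) i j = (if i \<le> j \<and> j \<le> n then sar X (b i) (b j) else undefined)"
  by (simp_all add: precomp_def)

lemma precomp_cong:
  assumes "\<And>i. i \<le> r \<Longrightarrow> f i = g i"
  shows "precomp Y f r = precomp Y g r"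
  using assms unfolding precomp_def by (auto simp: fun_eq_iff)

lemma precomp_precomp:
  assumes "opmap \<psi> r p"
  shows "precomp (precomp Y \<xi> p) \<psi> r = precomp Y (\<xi> \<circ> \<psi>) r"
  using assms unfolding precomp_def opmap_def by (auto simp: fun_eq_iff)

lemma precomp_id:
  assumes "is_simplex C Y"
  shows "precomp Y id (dim Y) = Y"
  using assms unfolding is_simplex_def precomp_def
  by (intro simplex.equality) (auto simp: fun_eq_iff not_le)

lemma is_simplex_precomp:
  assumes X: "is_simplex C X" and b: "opmap b n (dim X)"
  shows "is_simplex C (precomp X b n)"
proof -
  have b_le: "\<And>i. i \<le> n \<Longrightarrow> b i \<le> dim X"
    and b_mono: "\<And>i j. i \<le> j \<Longrightarrow> j \<le> n \<Longrightarrow> b i \<le> b j"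
    using b unfolding opmap_def by auto
  from X show ?thesis
    unfolding is_simplex_def precomp_sel using b_le b_mono by (auto intro: le_trans)
qed

lemma precomp_merge_identity_edge:
  assumes cat: "category C" and X: "is_simplex C X" and c: "Suc c \<le> dim X"
    and idm: "sar X c (Suc c) = Idm C (sob X c)"
  shows "precomp X (id(Suc c := c)) (dim X) = X"
proof -
  have ar: "\<And>i j. i \<le> j \<Longrightarrow> j \<le> dim X \<Longrightarrow>
      sar X i j \<in> Ar C \<and> Dom C (sar X i j) = sob X i \<and> Cod C (sar X i j) = sob X j"
    and trans: "\<And>i j k. i \<le> j \<Longrightarrow> j \<le> k \<Longrightarrow> k \<le> dim X \<Longrightarrow>
      sar X i k = Comp C (sar X j k) (sar X i j)"
    and sar_id: "\<And>i. i \<le> dim X \<Longrightarrow> sar X i i = Idm C (sob X i)"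
    and junk: "\<And>i. dim X < i \<Longrightarrow> sob X i = undefined"
      "\<And>i j. \<not> (i \<le> j \<and> j \<le> dim X) \<Longrightarrow> sar X i j = undefined"
    using X unfolding is_simplex_def by auto
  have unit: "\<And>f. f \<in> Ar C \<Longrightarrow> Comp C f (Idm C (Dom C f)) = f \<and> Comp C (Idm C (Cod C f)) f = f"
    using cat unfolding category_def by auto
  have sob_eq: "sob X (Suc c) = sob X c"
    using ar[of c "Suc c"] c cat idm unfolding category_def by auto
  have left: "sar X i (Suc c) = sar X i c" if "i \<le> c" for i
    using trans[of i c "Suc c"] unit[of "sar X i c"] ar[of i c] that c idm by auto
  have right: "sar X (Suc c) j = sar X c j" if "Suc c \<le> j" "j \<le> dim X" for j
    using trans[of c "Suc c" j] unit[of "sar X (Suc c) j"] ar[of "Suc c" j] that idm sob_eq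
    by auto
  show ?thesis
  proof (rule simplex.equality)
    show "sob (precomp X (id(Suc c := c)) (dim X)) = sob X"
      using sob_eq junk by (auto simp: fun_eq_iff)
    show "sar (precomp X (id(Suc c := c)) (dim X)) = sar X"
    proof (intro ext)
      fix i j
      show "sar (precomp X (id(Suc c := c)) (dim X)) i j = sar X i j"
        using left[of i] right[of j] sar_id[of c] sar_id[of "Suc c"] sob_eq c junk(2)[of i j]
        by (cases "i = Suc c"; cases "j = Suc c") (auto simp: not_less_eq_eq)
    qed
  qed simp_all
qed

definition degen :: "nat \<Rightarrow> nat \<Rightarrow> nat \<Rightarrow> nat" where
  "degen n x = (\<lambda>y. if y \<le> Suc n then if y \<le> x then y else y - 1 else undefined)"

definition face :: "nat \<Rightarrow> nat \<Rightarrow> nat \<Rightarrow> nat" where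
  "face n k = (\<lambda>y. if y \<le> n then if y < k then y else Suc y else undefined)"

lemma opmap_degen: "x \<le> n \<Longrightarrow> opmap (degen n x) (Suc n) n"
  unfolding opmap_def degen_def by auto

lemma degen_image:
  assumes "x \<le> n"
  shows "degen n x ` {0..Suc n} = {0..n}"
proof
  show "{0..n} \<subseteq> degen n x ` {0..Suc n}"
  proof
    fix y assume "y \<in> {0..n}"
    then show "y \<in> degen n x ` {0..Suc n}"
      by (cases "y \<le> x") (auto simp: degen_def image_iff intro: bexI[of _ "Suc y"])
  qed
qed (use assms in \<open>auto simp: degen_def\<close>)

lemma opmap_face: "opmap (face n k) n (Suc n)"
  unfolding opmap_def face_def by auto

lemma degen_face: "k = x \<or> k = Suc x \<Longrightarrow> y \<le> n \<Longrightarrow> degen n x (face n k y) = y"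
  unfolding degen_def face_def by auto

lemma dsim_face_degen:
  assumes "is_simplex C V" and "x \<le> dim V"
  shows "dsim C (V, face (dim V) x, precomp V (degen (dim V) x) (Suc (dim V)))
                (V, face (dim V) (Suc x), precomp V (degen (dim V) x) (Suc (dim V)))"
  using assms by (intro dsim.elem) (auto simp: opmap_degen degen_image opmap_face degen_face)

text \<open>Both maps factor through the degeneracy collapsing x and x+1, via its two sections;
  the factor h sends x+1 to b x + 1, which X cannot tell apart from b x.\<close>

lemma dsim_raise_along_identity_edge:
  assumes cat: "category C" and X: "is_simplex C X" and b: "opmap b n (dim X)"
    and x: "x \<le> n" and top: "Suc (b x) \<le> dim X"
    and gap: "x < n \<Longrightarrow> Suc (b x) \<le> b (Suc x)"
    and idm: "sar X (b x) (Suc (b x)) = Idm C (sob X (b x))"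
  shows "dsim C (precomp X b n, b(x := Suc (b x)), X) (precomp X b n, b, X)"
proof -
  define V where "V = precomp X b n"
  define W where "W = precomp V (degen n x) (Suc n)"
  define h where "h = (\<lambda>y. if y \<le> Suc n then if y \<le> x then b y
    else if y = Suc x then Suc (b x) else b (y - 1) else undefined)"
  have b_le: "\<And>i. i \<le> n \<Longrightarrow> b i \<le> dim X"
    and b_mono: "\<And>i j. i \<le> j \<Longrightarrow> j \<le> n \<Longrightarrow> b i \<le> b j"
    and b_junk: "\<And>i. n < i \<Longrightarrow> b i = undefined"
    using b unfolding opmap_def by auto
  have V: "is_simplex C V" and dim_V: "dim V = n"
    unfolding V_def using is_simplex_precomp[OF X b] by auto
  have h_mono: "h i \<le> h j" if "i \<le> j" "j \<le> Suc n" for i j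
  proof -
    have "b x \<le> b (j - 1)" if "x < j - 1" using b_mono[of x "j - 1"] that \<open>j \<le> Suc n\<close> by auto
    moreover have "Suc (b x) \<le> b (j - 1)" if "Suc x < j"
      using gap b_mono[of "Suc x" "j - 1"] that \<open>j \<le> Suc n\<close> by (auto intro: order_trans)
    ultimately show ?thesis
      using that b_mono[of i j] b_mono[of i x] b_mono[of "i - 1" "j - 1"] b_mono[of i "j - 1"] x
      unfolding h_def by auto
  qed
  have h: "opmap h (Suc n) (dim X)"
    unfolding opmap_def using h_mono b_le x top by (auto simp: h_def)
  define m where "m = id(Suc (b x) := b x)"
  have X_m: "precomp X m (dim X) = X"
    unfolding m_def by (rule precomp_merge_identity_edge[OF cat X top idm])
  have m_h: "m (h y) = m (b (degen n x y))" if "y \<le> Suc n" for y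
    using that by (auto simp: m_def h_def degen_def)
  have "W = precomp (precomp (precomp X m (dim X)) b n) (degen n x) (Suc n)"
    unfolding W_def V_def X_m ..
  also have "\<dots> = precomp X (m \<circ> b \<circ> degen n x) (Suc n)"
    by (simp add: precomp_precomp b opmap_degen[OF x])
  also have "\<dots> = precomp X (m \<circ> h) (Suc n)"
    by (rule precomp_cong) (simp add: m_h)
  also have "\<dots> = precomp X h (Suc n)"
    by (simp add: precomp_precomp[OF h, symmetric] X_m)
  finally have H: "is_dmor C (W, h, X)"
    unfolding is_dmor_def src_def tgt_def mapof_def W_def
    using is_simplex_precomp[OF V opmap_degen[OF x, folded dim_V]] X h dim_V by auto
  have "dsim C (dcomp (W, h, X) (V, face n x, W)) (dcomp (W, h, X) (V, face n (Suc x), W))"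
    using dsim.comp_left[OF dsim_face_degen[OF V, of x] H] x dim_V
    unfolding W_def by (simp add: src_def tgt_def)
  moreover have "dcomp (W, h, X) (V, face n x, W) = (V, b(x := Suc (b x)), X)"
    and "dcomp (W, h, X) (V, face n (Suc x), W) = (V, b, X)"
    using x b_junk by (auto simp: dcomp_def src_def tgt_def mapof_def dim_V fun_eq_iff h_def face_def)
  ultimately show ?thesis unfolding V_def by simp
qed

lemma sar_precomp_fibre:
  assumes "is_simplex C Y" and "i \<le> j" "j \<le> p" and "\<xi> i = \<xi> j" "\<xi> j \<le> dim Y"
  shows "sar (precomp Y \<xi> p) i j = Idm C (sob (precomp Y \<xi> p) i)"
  using assms unfolding is_simplex_def by auto

lemma precomp_fibrewise:
  assumes "opmap \<phi> p p" and "\<forall>i\<le>p. \<xi> (\<phi> i) = \<xi> i"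
  shows "precomp (precomp Y \<xi> p) \<phi> p = precomp Y \<xi> p"
  using assms by (auto simp: precomp_precomp intro: precomp_cong)

lemma deflation_raise_dsim:
  assumes cat: "category C" and Y: "is_simplex C Y" and \<xi>: "opmap \<xi> p (dim Y)"
    and \<phi>: "opmap \<phi> p p" and \<phi>_fibre: "\<forall>i\<le>p. \<xi> (\<phi> i) = \<xi> i"
    and x: "x \<le> p" and \<phi>_x: "\<phi> x < x" and fixed_above: "\<forall>i. x < i \<and> i \<le> p \<longrightarrow> \<phi> i = i"
  shows "\<xi> (Suc (\<phi> x)) = \<xi> (\<phi> x)"
    and "dsim C (precomp Y \<xi> p, \<phi>(x := Suc (\<phi> x)), precomp Y \<xi> p) (precomp Y \<xi> p, \<phi>, precomp Y \<xi> p)"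
proof -
  define X where "X = precomp Y \<xi> p"
  have X: "is_simplex C X" and dim_X: "dim X = p"
    unfolding X_def using is_simplex_precomp[OF Y \<xi>] by auto
  have \<xi>_le: "\<And>i. i \<le> p \<Longrightarrow> \<xi> i \<le> dim Y"
    and \<xi>_mono: "\<And>i j. i \<le> j \<Longrightarrow> j \<le> p \<Longrightarrow> \<xi> i \<le> \<xi> j"
    using \<xi> unfolding opmap_def by auto
  show \<xi>_eq: "\<xi> (Suc (\<phi> x)) = \<xi> (\<phi> x)"
    using \<xi>_mono[of "\<phi> x" "Suc (\<phi> x)"] \<xi>_mono[of "Suc (\<phi> x)" x] \<phi>_fibre \<phi>_x x by auto
  have "sar X (\<phi> x) (Suc (\<phi> x)) = Idm C (sob X (\<phi> x))"
    unfolding X_def by (rule sar_precomp_fibre[OF Y]) (use \<xi>_eq \<xi>_le \<phi>_x x in auto)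
  then have "dsim C (precomp X \<phi> p, \<phi>(x := Suc (\<phi> x)), X) (precomp X \<phi> p, \<phi>, X)"
    using dsim_raise_along_identity_edge[OF cat X \<phi>[folded dim_X] x[folded dim_X]]
      \<phi>_x x fixed_above dim_X by simp
  then show "dsim C (X, \<phi>(x := Suc (\<phi> x)), X) (X, \<phi>, X)"
    unfolding X_def precomp_fibrewise[OF \<phi> \<phi>_fibre] .
qed

lemma deflation_dsim_did:
  assumes cat: "category C" and Y: "is_simplex C Y" and \<xi>: "opmap \<xi> p (dim Y)"
  shows "opmap \<phi> p p \<Longrightarrow> \<forall>i\<le>p. \<phi> i \<le> i \<and> \<xi> (\<phi> i) = \<xi> i \<Longrightarrow>
    dsim C (precomp Y \<xi> p, \<phi>, precomp Y \<xi> p) (did (precomp Y \<xi> p))"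
proof (induction \<phi> rule: measure_induct_rule[where f = "\<lambda>\<phi>. \<Sum>i\<le>p. i - \<phi> i"])
  case (less \<phi>)
  define X where "X = precomp Y \<xi> p"
  have \<phi>_le: "\<And>i. i \<le> p \<Longrightarrow> \<phi> i \<le> i" and \<phi>_fibre: "\<forall>i\<le>p. \<xi> (\<phi> i) = \<xi> i"
    and \<phi>_mono: "\<And>i j. i \<le> j \<Longrightarrow> j \<le> p \<Longrightarrow> \<phi> i \<le> \<phi> j"
    and \<phi>_junk: "\<And>i. p < i \<Longrightarrow> \<phi> i = undefined"
    using less.prems unfolding opmap_def by auto
  show ?case
  proof (cases "\<forall>i\<le>p. \<phi> i = i")
    case True
    then have "(X, \<phi>, X) = did X"
      using \<phi>_junk by (auto simp: X_def did_def fun_eq_iff not_le)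
    moreover have "is_dmor C (X, \<phi>, X)"
      using is_simplex_precomp[OF Y \<xi>] less.prems(1) precomp_fibrewise[OF less.prems(1) \<phi>_fibre]
      by (simp add: X_def is_dmor_def src_def tgt_def mapof_def)
    ultimately show ?thesis using dsim.refl unfolding X_def by metis
  next
    case False
    define x where "x = Max {i. i \<le> p \<and> \<phi> i \<noteq> i}"
    have "x \<in> {i. i \<le> p \<and> \<phi> i \<noteq> i}"
      unfolding x_def using False by (intro Max_in) auto
    then have x: "x \<le> p" and \<phi>_x: "\<phi> x < x"
      using \<phi>_le[of x] by auto
    have fixed_above: "\<forall>i. x < i \<and> i \<le> p \<longrightarrow> \<phi> i = i"
      using Max_ge[of "{i. i \<le> p \<and> \<phi> i \<noteq> i}"] unfolding x_def by fastforce
    note raise = deflation_raise_dsim[OF cat Y \<xi> less.prems(1) \<phi>_fibre x \<phi>_x fixed_above]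
    define \<phi>' where "\<phi>' = \<phi>(x := Suc (\<phi> x))"
    have "opmap \<phi>' p p"
      unfolding opmap_def \<phi>'_def
      using \<phi>_le \<phi>_junk \<phi>_x x fixed_above \<phi>_mono[of _ x] \<phi>_mono
      by (auto intro: le_trans less_imp_le_nat)
    moreover have "\<forall>i\<le>p. \<phi>' i \<le> i \<and> \<xi> (\<phi>' i) = \<xi> i"
      unfolding \<phi>'_def using \<phi>_le \<phi>_fibre \<phi>_x raise(1) by auto
    moreover have "(\<Sum>i\<le>p. i - \<phi>' i) < (\<Sum>i\<le>p. i - \<phi> i)"
      by (rule sum_strict_mono_ex1) (use \<phi>_x x in \<open>auto simp: \<phi>'_def\<close>)
    ultimately have "dsim C (X, \<phi>', X) (did X)"
      using less.IH unfolding X_def by blast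
    then show ?thesis
      using raise(2) unfolding X_def \<phi>'_def by (blast intro: dsim.sym dsim.trans)
  qed
qed

lemma is_dmor_did: "is_simplex C Y \<Longrightarrow> is_dmor C (did Y)"
  using precomp_id[of C Y] precomp_cong[of "dim Y" "\<lambda>i. if i \<le> dim Y then i else undefined" id Y]
  by (auto simp: is_dmor_def did_def src_def tgt_def mapof_def opmap_def)

lemma opmap_least_section:
  assumes \<xi>: "opmap \<xi> p q" and surj: "\<xi> ` {0..p} = {0..q}"
  obtains g where "opmap g q p" "\<forall>j\<le>q. \<xi> (g j) = j" "\<forall>i\<le>p. g (\<xi> i) \<le> i"
proof
  define g where "g = (\<lambda>j. if j \<le> q then LEAST i. i \<le> p \<and> \<xi> i = j else undefined)"
  have \<xi>_le: "\<And>i. i \<le> p \<Longrightarrow> \<xi> i \<le> q" and \<xi>_mono: "\<And>i j. i \<le> j \<Longrightarrow> j \<le> p \<Longrightarrow> \<xi> i \<le> \<xi> j"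
    using \<xi> unfolding opmap_def by auto
  have g: "g j \<le> p \<and> \<xi> (g j) = j" if j: "j \<le> q" for j
  proof -
    obtain i where "i \<le> p \<and> \<xi> i = j"
      using surj j by (force simp: set_eq_iff image_iff)
    then have "(LEAST i. i \<le> p \<and> \<xi> i = j) \<le> p \<and> \<xi> (LEAST i. i \<le> p \<and> \<xi> i = j) = j"
      by (rule LeastI)
    then show ?thesis
      unfolding g_def using j by simp
  qed
  then show "\<forall>j\<le>q. \<xi> (g j) = j" by blast
  show "\<forall>i\<le>p. g (\<xi> i) \<le> i"
    unfolding g_def using \<xi>_le by (auto intro: Least_le)
  have "g i \<le> g j" if "i \<le> j" "j \<le> q" for i j
  proof (rule ccontr)
    assume "\<not> g i \<le> g j"
    then have "j \<le> i"
      using \<xi>_mono[of "g j" "g i"] g[of i] g[of j] that by auto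
    then show False
      using \<open>\<not> g i \<le> g j\<close> that by auto
  qed
  then show "opmap g q p"
    unfolding opmap_def using g by (auto simp: g_def)
qed

theorem lemma17:
  fixes C :: "('o, 'm) cat" and X Y :: "('o, 'm) simplex" and \<xi> :: "nat \<Rightarrow> nat"
  assumes "category C"
    and "is_dmor C (X, \<xi>, Y)"
    and "\<xi> ` {0..dim X} = {0..dim Y}"
  shows "quot_iso C (X, \<xi>, Y)"
proof -
  have X: "is_simplex C X" and Y: "is_simplex C Y" and \<xi>: "opmap \<xi> (dim X) (dim Y)"
    and X_eq: "precomp Y \<xi> (dim X) = X"
    using assms(2) by (auto simp: is_dmor_def src_def tgt_def mapof_def)
  obtain g where g: "opmap g (dim Y) (dim X)" and \<xi>_g: "\<forall>j\<le>dim Y. \<xi> (g j) = j"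
    and g_\<xi>: "\<forall>i\<le>dim X. g (\<xi> i) \<le> i"
    using opmap_least_section[OF \<xi> assms(3)] by blast
  have "precomp X g (dim Y) = precomp Y (\<xi> \<circ> g) (dim Y)"
    using precomp_precomp[OF g, of Y \<xi>] X_eq by simp
  also have "\<dots> = Y"
    using precomp_cong[of "dim Y" "\<xi> \<circ> g" id Y] \<xi>_g precomp_id[OF Y] by simp
  finally have G: "is_dmor C (Y, g, X)"
    using X Y g by (simp add: is_dmor_def src_def tgt_def mapof_def)
  define \<phi> where "\<phi> = (\<lambda>i. if i \<le> dim X then g (\<xi> i) else undefined)"
  have "opmap \<phi> (dim X) (dim X) \<and> (\<forall>i\<le>dim X. \<phi> i \<le> i \<and> \<xi> (\<phi> i) = \<xi> i)"
    using g \<xi> \<xi>_g g_\<xi> unfolding \<phi>_def opmap_def by auto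
  then have "dsim C (X, \<phi>, X) (did X)"
    using deflation_dsim_did[OF assms(1) Y \<xi>, of \<phi>] unfolding X_eq by blast
  moreover have "dcomp (Y, g, X) (X, \<xi>, Y) = (X, \<phi>, X)"
    unfolding dcomp_def src_def tgt_def mapof_def \<phi>_def by (simp add: fun_eq_iff)
  moreover have "dcomp (X, \<xi>, Y) (Y, g, X) = did Y"
    using \<xi>_g by (auto simp: dcomp_def did_def src_def tgt_def mapof_def fun_eq_iff)
  ultimately show ?thesis
    unfolding quot_iso_def using G dsim.refl[OF is_dmor_did[OF Y]]
    by (intro exI[of _ "(Y, g, X)"]) (simp add: src_def tgt_def)
qed

end
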